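(* Let $G_1,G_2$ be $q$-cut-dense graphs. Then $G_1\cup G_2$ is $\frac{q|V(G_1)\cap V(G_2)|}{4|V(G_1)\cup V(G_2)|}$-cut-dense.
   Context: A graph $G$ is $q$-cut-dense if for every partition $V(G)=A\cup B$ into disjoint sets, $e_G(A,B)\ge q|A||B|$, where $e_G(A,B)$ counts edges with one endpoint in $A$ and one in $B$. $G_1\cup G_2$ is the graph with vertex set $V(G_1)\cup V(G_2)$ and edge set $E(G_1)\cup E(G_2)$. *)

theory Defs
  imports Main Complex_Main
begin

definition graph :: "'a set \<Rightarrow> 'a set set \<Rightarrow> bool" where
  "graph V E \<longleftrightarrow> finite V \<and> (\<forall>e\<in>E. e \<subseteq> V \<and> card e = 2)"

definition e_betw :: "'a set set \<Rightarrow> 'a set \<Rightarrow> 'a set \<Rightarrow> nat" where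
  "e_betw E A B = card {e\<in>E. \<exists>a\<in>A. \<exists>b\<in>B. e = {a, b}}"

definition cut_dense :: "real \<Rightarrow> 'a set \<Rightarrow> 'a set set \<Rightarrow> bool" where
  "cut_dense q V E \<longleftrightarrow>
     (\<forall>A B. A \<union> B = V \<longrightarrow> A \<inter> B = {} \<longrightarrow>
        real (e_betw E A B) \<ge> q * real (card A) * real (card B))"

end

theory Submission
  imports Defs
begin

text \<open>Let \<open>I = V\<^sub>1 \<inter> V\<^sub>2\<close>, \<open>k = |I|\<close> and \<open>n = |V\<^sub>1 \<union> V\<^sub>2|\<close>, and let \<open>A, B\<close> partition
  \<open>V\<^sub>1 \<union> V\<^sub>2\<close>. By symmetry \<open>A\<close> contains at least \<open>k/2\<close> vertices of \<open>I\<close>, and since \<open>B\<close> is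
  covered by \<open>V\<^sub>1\<close> and \<open>V\<^sub>2\<close>, some \<open>V\<^sub>i\<close> contains at least \<open>|B|/2\<close> vertices of \<open>B\<close>.
  The cut of \<open>A, B\<close> restricts to the cut \<open>A \<inter> V\<^sub>i, B \<inter> V\<^sub>i\<close> of \<open>G\<^sub>i\<close>, which therefore
  carries at least \<open>q (k/2) (|B|/2) \<ge> q k |A| |B| / (4n)\<close> edges.\<close>

lemma graph_finite_edges: "graph V E \<Longrightarrow> finite E"
  unfolding graph_def by (meson PowI finite_Pow_iff finite_subset subsetI)

lemma e_betw_mono:
  assumes "finite E'" "E \<subseteq> E'" "A \<subseteq> A'" "B \<subseteq> B'"
  shows "e_betw E A B \<le> e_betw E' A' B'"
  unfolding e_betw_def using assms by (intro card_mono) (auto, blast)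

lemma e_betw_commute: "e_betw E A B = e_betw E B A"
  unfolding e_betw_def by (metis insert_commute)

lemma cut_dense_nonpos: "q \<le> 0 \<Longrightarrow> cut_dense q V E"
  unfolding cut_dense_def by (simp add: mult_nonpos_nonneg order_trans[OF _ of_nat_0_le_iff])

lemma card_le_twice_Int_cover:
  assumes "finite S" "S \<subseteq> A \<union> B"
  shows "card S \<le> 2 * card (S \<inter> A) \<or> card S \<le> 2 * card (S \<inter> B)"
proof -
  have "S = (S \<inter> A) \<union> (S \<inter> B)" using assms(2) by blast
  then have "card S \<le> card (S \<inter> A) + card (S \<inter> B)" by (metis card_Un_le)
  then show ?thesis by linarith
qed

lemma cut_dense_restrict:
  assumes "cut_dense q V E" "finite E" "V \<subseteq> A \<union> B" "A \<inter> B = {}"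
  shows "q * card (A \<inter> V) * card (B \<inter> V) \<le> e_betw E A B"
proof -
  have "(A \<inter> V) \<union> (B \<inter> V) = V" "(A \<inter> V) \<inter> (B \<inter> V) = {}" using assms(3,4) by blast+
  then have "q * card (A \<inter> V) * card (B \<inter> V) \<le> e_betw E (A \<inter> V) (B \<inter> V)"
    using assms(1) unfolding cut_dense_def by blast
  also have "\<dots> \<le> e_betw E A B" using assms(2) by (intro of_nat_mono e_betw_mono) auto
  finally show ?thesis .
qed

lemma cut_dense_subgraph_cut_bound:
  assumes "cut_dense q V E" "q \<ge> 0" "finite V" "finite E'" "E \<subseteq> E'"
    and "V \<subseteq> A \<union> B" "A \<inter> B = {}"
    and "I \<subseteq> V" "card I \<le> 2 * card (A \<inter> I)" "card B \<le> 2 * card (B \<inter> V)"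
  shows "q * card I * card B / 4 \<le> e_betw E' A B"
proof -
  have "card (A \<inter> I) \<le> card (A \<inter> V)" using assms(3,8) by (intro card_mono) auto
  then have "card I * card B \<le> (2 * card (A \<inter> V)) * (2 * card (B \<inter> V))"
    using assms(9,10) by (intro mult_le_mono) auto
  then have "real (card I * card B) \<le> real ((2 * card (A \<inter> V)) * (2 * card (B \<inter> V)))"
    by (rule of_nat_mono)
  then have "real (card I) * card B \<le> 4 * (real (card (A \<inter> V)) * card (B \<inter> V))"
    by simp
  from mult_left_mono[OF this assms(2)]
  have "q * card I * card B / 4 \<le> q * card (A \<inter> V) * card (B \<inter> V)"
    by (simp add: mult_ac)
  also have "\<dots> \<le> e_betw E A B"
    using assms by (intro cut_dense_restrict) (auto intro: finite_subset)
  also have "\<dots> \<le> e_betw E' A B" using assms(4,5) by (intro of_nat_mono e_betw_mono) auto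
  finally show ?thesis .
qed

lemma cut_dense_union_cut_bound:
  assumes "cut_dense q V1 E1" "cut_dense q V2 E2" "q \<ge> 0"
    and "finite V1" "finite V2" "finite (E1 \<union> E2)"
    and "A \<union> B = V1 \<union> V2" "A \<inter> B = {}"
    and "card (V1 \<inter> V2) \<le> 2 * card (A \<inter> (V1 \<inter> V2))"
  shows "q * card (V1 \<inter> V2) * card B / 4 \<le> e_betw (E1 \<union> E2) A B"
proof -
  have "finite B" "B \<subseteq> V1 \<union> V2" using assms(4,5,7) by (auto intro: finite_subset)
  then consider "card B \<le> 2 * card (B \<inter> V1)" | "card B \<le> 2 * card (B \<inter> V2)"
    using card_le_twice_Int_cover by blast
  then show ?thesis
  proof cases
    case 1
    with assms show ?thesis by (intro cut_dense_subgraph_cut_bound[of q V1 E1]) auto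
  next
    case 2
    with assms show ?thesis by (intro cut_dense_subgraph_cut_bound[of q V2 E2]) auto
  qed
qed

theorem lemma3p8:
  fixes V1 V2 :: "'a set" and E1 E2 :: "'a set set" and q :: real
  assumes "graph V1 E1" and "graph V2 E2"
    and "cut_dense q V1 E1" and "cut_dense q V2 E2"
  shows "cut_dense (q * real (card (V1 \<inter> V2)) / (4 * real (card (V1 \<union> V2))))
           (V1 \<union> V2) (E1 \<union> E2)"
proof (cases "q \<ge> 0")
  case False
  then show ?thesis by (intro cut_dense_nonpos) (simp add: divide_nonpos_nonneg mult_nonpos_nonneg)
next
  case True
  let ?I = "V1 \<inter> V2" and ?V = "V1 \<union> V2"
  have fin: "finite V1" "finite V2" "finite (E1 \<union> E2)"
    using assms(1,2) graph_finite_edges by (auto simp: graph_def)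
  have bound: "q * card ?I / (4 * real (card ?V)) * card A * card B \<le> e_betw (E1 \<union> E2) A B"
    if "A \<union> B = ?V" "A \<inter> B = {}" "card ?I \<le> 2 * card (A \<inter> ?I)" for A B
  proof -
    have "card A \<le> card ?V" using that(1) fin by (metis Un_upper1 card_mono finite_UnI)
    then have "card A / card ?V \<le> (1::real)" by (auto simp: divide_le_eq_1)
    then have "q * card ?I * card B / 4 * (card A / card ?V) \<le> q * card ?I * card B / 4"
      using True by (intro mult_left_le) auto
    then have "q * card ?I / (4 * real (card ?V)) * card A * card B \<le> q * card ?I * card B / 4"
      by (simp add: field_simps)
    also have "\<dots> \<le> e_betw (E1 \<union> E2) A B"
      using assms(3,4) True fin that by (rule cut_dense_union_cut_bound)
    finally show ?thesis .
  qed
  show ?thesis unfolding cut_dense_def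
  proof (intro allI impI)
    fix A B assume AB: "A \<union> B = ?V" "A \<inter> B = {}"
    have "finite ?I" "?I \<subseteq> A \<union> B" using fin AB by auto
    then consider "card ?I \<le> 2 * card (?I \<inter> A)" | "card ?I \<le> 2 * card (?I \<inter> B)"
      using card_le_twice_Int_cover by blast
    then show "q * card ?I / (4 * real (card ?V)) * card A * card B \<le> e_betw (E1 \<union> E2) A B"
    proof cases
      case 1
      with AB show ?thesis by (intro bound) (auto simp: Int_commute)
    next
      case 2
      with AB bound[of B A] show ?thesis by (auto simp: Int_commute e_betw_commute mult_ac)
    qed
  qed
qed

end
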